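(* Let $k,n$ be positive integers with $k\leqslant n$ and let $X\subseteq [n]^k_<$. Then $X$ is a matroid if and only if its barycentric subdivision $\mathcal{B}(X)\subseteq \mathrm{Conf}_k([n])$ is a Coxeter matroid.
   Context: $[n]:=\{1,\ldots,n\}$. $[n]^k_<$ denotes the set of $k$-element subsets of $[n]$, each identified with the increasing tuple $(x_1<\cdots<x_k)$ of its elements; $A+B:=(A\setminus B)\cup(B\setminus A)$. $X\subseteq[n]^k_<$ is a matroid if for all $A,B\in X$ and $a\in A\setminus B$ there exists $b\in B\setminus A$ with $A+\{a,b\}\in X$. $\mathrm{Conf}_k([n])$ is the set of $k$-tuples $(a_1,\ldots,a_k)$ of pairwise distinct elements of $[n]$. For $x\in\mathrm{Conf}_k([n])$ and $i\in[k]$, let $P^{(i)}(x)\in[n]^i_<$ be the increasing rearrangement of $\{x_1,\ldots,x_i\}$. The Bruhat order on $[n]^i_<$ is $u\leqslant v$ iff $u_j\leqslant v_j$ for all $j\in[i]$; the Bruhat order on $\mathrm{Conf}_k([n])$ is $x\leqslant y$ iff $P^{(i)}(x)\leqslant P^{(i)}(y)$ in $[n]^i_<$ for all $i\in[k]$ (this is the Bruhat order of the parabolic quotient $S_n^{\{k+1,\ldots,n-1\}}$ under the identification of $\mathrm{Conf}_k([n])$ with that quotient). The symmetric group $S_n$ acts on $\mathrm{Conf}_k([n])$ by $w\cdot(x_1,\ldots,x_k)=(w(x_1),\ldots,w(x_k))$. A subset $Y\subseteq\mathrm{Conf}_k([n])$ is a Coxeter matroid if for every $w\in S_n$ the set $\{w\cdot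 y: y\in Y\}$ has a unique maximal element (a maximum) in the Bruhat order of $\mathrm{Conf}_k([n])$. The barycentric subdivision of $X$ is $\mathcal{B}(X):=\{(x_{\sigma(1)},\ldots,x_{\sigma(k)}): x\in X,\ \sigma\in S_k\}\subseteq\mathrm{Conf}_k([n])$. *)

theory Defs
  imports "HOL-Combinatorics.Permutations"
begin

text \<open>[n]^k_<: k-element subsets of {1..n}; the increasing tuple of A is sorted_list_of_set A.\<close>
definition ksets :: "nat \<Rightarrow> nat \<Rightarrow> nat set set" where
  "ksets n k = {A. A \<subseteq> {1..n} \<and> card A = k}"

definition symdiff :: "nat set \<Rightarrow> nat set \<Rightarrow> nat set" where
  "symdiff A B = (A - B) \<union> (B - A)"

definition is_matroid :: "nat set set \<Rightarrow> bool" where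
  "is_matroid X \<longleftrightarrow> (\<forall>A\<in>X. \<forall>B\<in>X. \<forall>a\<in>A - B. \<exists>b\<in>B - A. symdiff A {a, b} \<in> X)"

definition conf :: "nat \<Rightarrow> nat \<Rightarrow> nat list set" where
  "conf k n = {x. length x = k \<and> distinct x \<and> set x \<subseteq> {1..n}}"

text \<open>P^(i)(x): increasing rearrangement of the first i entries, as a set.\<close>
definition P :: "nat \<Rightarrow> nat list \<Rightarrow> nat set" where
  "P i x = set (take i x)"

definition bruhat_set :: "nat \<Rightarrow> nat set \<Rightarrow> nat set \<Rightarrow> bool" where
  "bruhat_set i u v \<longleftrightarrow> (\<forall>j<i. sorted_list_of_set u ! j \<le> sorted_list_of_set v ! j)"

definition bruhat_conf :: "nat \<Rightarrow> nat list \<Rightarrow> nat list \<Rightarrow> bool" where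
  "bruhat_conf k x y \<longleftrightarrow> (\<forall>i\<in>{1..k}. bruhat_set i (P i x) (P i y))"

definition act :: "(nat \<Rightarrow> nat) \<Rightarrow> nat list \<Rightarrow> nat list" where
  "act w x = map w x"

definition is_maximum :: "nat \<Rightarrow> nat list set \<Rightarrow> nat list \<Rightarrow> bool" where
  "is_maximum k S m \<longleftrightarrow> m \<in> S \<and> (\<forall>y\<in>S. bruhat_conf k y m)"

definition coxeter_matroid :: "nat \<Rightarrow> nat \<Rightarrow> nat list set \<Rightarrow> bool" where
  "coxeter_matroid k n Y \<longleftrightarrow>
     (\<forall>w. w permutes {1..n} \<longrightarrow> (\<exists>!m. is_maximum k (act w ` Y) m))"

definition barycentric :: "nat \<Rightarrow> nat set set \<Rightarrow> nat list set" where
  "barycentric k X = {map (\<lambda>j. sorted_list_of_set A ! \<sigma> j) [0..<k] | A \<sigma>.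
                       A \<in> X \<and> \<sigma> permutes {0..<k}}"

end

theory Submission
  imports Defs
begin

(* Both directions run through the Gale order, which compares two sets by the number of their
   elements above each threshold c; on i-sets it is the Bruhat order of [n]^i_<.
   A matroid has a basis M that Gale-dominates all bases: take M of maximal element sum, and
   refute a set B beating M above some c, chosen as close to M as possible, by two exchanges.
   Listing M decreasingly gives a configuration each of whose prefixes dominates every i-subset
   of a basis, i.e. the Bruhat maximum of B(X); applied to every w(X), which is again a matroid,
   this gives the forward direction. Conversely, if the exchange axiom fails for A, B and
   a in A - B, pick w ranking A - {a} on top and B - A right below it. The top set A0 of a Bruhat
   maximum of w B(X) Gale-dominates w(A) and w(B), which squeezes
   A - {a} <= A0 <= (A - {a}) Un (B - A), so A0 = A + {a, b} for some b in B - A. *)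

definition gale_le :: "nat set \<Rightarrow> nat set \<Rightarrow> bool" where
  "gale_le u v \<longleftrightarrow> (\<forall>c. card (u \<inter> {c..}) \<le> card (v \<inter> {c..}))"

lemma bruhat_set_imp_gale_le:
  assumes "finite u" "finite v" "card u = i" "card v = i" "bruhat_set i u v"
  shows "gale_le u v"
  unfolding gale_le_def
proof
  fix c
  define su where "su = sorted_list_of_set u"
  define sv where "sv = sorted_list_of_set v"
  have lu: "length su = i" "distinct su" "set su = u" using assms unfolding su_def by auto
  have lv: "length sv = i" "distinct sv" "set sv = v" using assms unfolding sv_def by auto
  have le: "su ! j \<le> sv ! j" if "j < i" for j
    using assms(5) that unfolding bruhat_set_def su_def sv_def by auto
  have "u \<inter> {c..} = (\<lambda>l. su ! l) ` {l. l < i \<and> c \<le> su ! l}"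
    using lu by (auto simp: in_set_conv_nth)
  then have "card (u \<inter> {c..}) = card ((\<lambda>l. su ! l) ` {l. l < i \<and> c \<le> su ! l})"
    by simp
  also have "\<dots> = card {l. l < i \<and> c \<le> su ! l}"
    by (rule card_image) (use lu in \<open>auto simp: inj_on_def nth_eq_iff_index_eq\<close>)
  also have "\<dots> \<le> card {l. l < i \<and> c \<le> sv ! l}"
    by (rule card_mono) (use le in \<open>auto intro: order_trans\<close>)
  also have "\<dots> = card ((\<lambda>l. sv ! l) ` {l. l < i \<and> c \<le> sv ! l})"
    by (rule card_image[symmetric]) (use lv in \<open>auto simp: inj_on_def nth_eq_iff_index_eq\<close>)
  also have "\<dots> \<le> card (v \<inter> {c..})"
    by (rule card_mono) (use assms lv in auto)
  finally show "card (u \<inter> {c..}) \<le> card (v \<inter> {c..})" .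
qed

lemma gale_le_imp_bruhat_set:
  assumes "finite u" "finite v" "card u = i" "card v = i" "gale_le u v"
  shows "bruhat_set i u v"
  unfolding bruhat_set_def
proof (intro allI impI)
  fix j assume j: "j < i"
  define su where "su = sorted_list_of_set u"
  define sv where "sv = sorted_list_of_set v"
  have lu: "length su = i" "distinct su" "set su = u" "sorted su" using assms unfolding su_def by auto
  have lv: "length sv = i" "distinct sv" "set sv = v" "sorted sv" using assms unfolding sv_def by auto
  show "sorted_list_of_set u ! j \<le> sorted_list_of_set v ! j"
  proof (rule ccontr)
    assume "\<not> ?thesis"
    then have lt: "sv ! j < su ! j" unfolding su_def sv_def by simp
    define c where "c = su ! j"
    have "i - j = card ((\<lambda>l. su ! l) ` {j..<i})"
      by (subst card_image) (use lu in \<open>auto simp: inj_on_def nth_eq_iff_index_eq\<close>)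
    also have "\<dots> \<le> card (u \<inter> {c..})"
      by (rule card_mono) (use assms lu j in \<open>auto simp: c_def sorted_nth_mono\<close>)
    also have "\<dots> \<le> card (v \<inter> {c..})"
      using assms(5) unfolding gale_le_def by blast
    also have "\<dots> \<le> card ((\<lambda>l. sv ! l) ` {j<..<i})"
    proof (rule card_mono)
      show "v \<inter> {c..} \<subseteq> (\<lambda>l. sv ! l) ` {j<..<i}"
      proof
        fix x assume x: "x \<in> v \<inter> {c..}"
        then obtain l where l: "l < i" "x = sv ! l" using lv by (auto simp: in_set_conv_nth)
        have "\<not> l \<le> j"
          using x l lt lv j sorted_nth_mono[of sv l j] by (auto simp: c_def)
        then show "x \<in> (\<lambda>l. sv ! l) ` {j<..<i}" using l by auto
      qed
    qed simp
    also have "\<dots> \<le> i - j - 1"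
      using card_image_le[of "{j<..<i}" "\<lambda>l. sv ! l"] by simp
    finally show False using j by linarith
  qed
qed

lemma bruhat_set_antisym:
  assumes "finite u" "finite v" "card u = i" "card v = i" "bruhat_set i u v" "bruhat_set i v u"
  shows "u = v"
proof -
  have "sorted_list_of_set u = sorted_list_of_set v"
    by (rule nth_equalityI) (use assms in \<open>auto simp: bruhat_set_def intro: order_antisym\<close>)
  then show ?thesis using assms by (metis sorted_list_of_set.set_sorted_key_list_of_set)
qed

lemma set_take_Suc_diff:
  assumes "distinct x" "j < length x"
  shows "set (take (Suc j) x) - set (take j x) = {x ! j}"
proof -
  have "distinct (take j x @ [x ! j])"
    using assms by (metis distinct_take take_Suc_conv_app_nth)
  then show ?thesis using assms by (auto simp: take_Suc_conv_app_nth)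
qed

lemma bruhat_conf_antisym:
  assumes x: "length x = k" "distinct x" and y: "length y = k" "distinct y"
    and "bruhat_conf k x y" "bruhat_conf k y x"
  shows "x = y"
proof -
  have prefix_eq: "set (take i x) = set (take i y)" if "i \<le> k" for i
  proof (cases "i = 0")
    case False
    have "card (set (take i x)) = i" "card (set (take i y)) = i"
      using x y that by (simp_all add: distinct_card)
    then show ?thesis
      by (rule bruhat_set_antisym[rotated 2])
         (use assms that False in \<open>auto simp: bruhat_conf_def P_def\<close>)
  qed simp
  show ?thesis
  proof (rule nth_equalityI)
    show "length x = length y" using x y by simp
    fix j assume "j < length x"
    then have "{x ! j} = {y ! j}"
      using set_take_Suc_diff[of x j] set_take_Suc_diff[of y j] x y
        prefix_eq[of j] prefix_eq[of "Suc j"] by simp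
    then show "x ! j = y ! j" by simp
  qed
qed

lemma is_maximum_unique:
  assumes "\<forall>x\<in>S. length x = k \<and> distinct x" "is_maximum k S m1" "is_maximum k S m2"
  shows "m1 = m2"
  using assms bruhat_conf_antisym unfolding is_maximum_def by metis

lemma barycentric_eq:
  assumes "\<forall>A\<in>X. finite A \<and> card A = k"
  shows "barycentric k X = {x. length x = k \<and> distinct x \<and> set x \<in> X}"
proof (intro equalityI subsetI)
  fix x assume "x \<in> barycentric k X"
  then obtain A \<sigma> where A: "A \<in> X" "\<sigma> permutes {0..<k}"
    and x: "x = map (\<lambda>j. sorted_list_of_set A ! \<sigma> j) [0..<k]"
    unfolding barycentric_def by auto
  have fA: "finite A" "length (sorted_list_of_set A) = k" using A assms by auto
  have "x = permute_list \<sigma> (sorted_list_of_set A)"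
    unfolding permute_list_def x fA(2) ..
  then have "mset x = mset (sorted_list_of_set A)"
    using A(2) fA(2) by (simp add: atLeast0LessThan)
  then have "set x = A" "distinct x"
    using fA by (auto dest: mset_eq_setD simp: mset_eq_imp_distinct_iff)
  moreover have "length x = k" using x by simp
  ultimately show "x \<in> {x. length x = k \<and> distinct x \<and> set x \<in> X}" using A by simp
next
  fix x assume x: "x \<in> {x. length x = k \<and> distinct x \<and> set x \<in> X}"
  define A where "A = set x"
  have len: "length (sorted_list_of_set A) = k" using x assms unfolding A_def by auto
  have "mset x = mset (sorted_list_of_set A)"
    using x unfolding A_def by (simp add: mset_set_set[symmetric])
  then obtain \<sigma> where \<sigma>: "\<sigma> permutes {..<length (sorted_list_of_set A)}"
    "permute_list \<sigma> (sorted_list_of_set A) = x"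
    using mset_eq_permutation by blast
  have "x = map (\<lambda>j. sorted_list_of_set A ! \<sigma> j) [0..<k]"
    using \<sigma>(2) len unfolding permute_list_def by simp
  moreover have "\<sigma> permutes {0..<k}" using \<sigma>(1) len by (simp add: atLeast0LessThan)
  ultimately show "x \<in> barycentric k X" using x unfolding barycentric_def A_def by blast
qed

lemma act_barycentric:
  assumes "bij w" "\<forall>A\<in>X. finite A \<and> card A = k"
  shows "act w ` barycentric k X = barycentric k ((`) w ` X)"
proof -
  have inj: "inj_on w S" "inj_on (inv w) S" for S
    using bij_is_inj[OF assms(1)] bij_is_inj[OF bij_imp_bij_inv[OF assms(1)]]
    by (auto intro: inj_on_subset)
  have "\<forall>A\<in>(`) w ` X. finite A \<and> card A = k"
    using assms(2) inj by (auto simp: card_image)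
  note eqs = barycentric_eq[OF assms(2)] barycentric_eq[OF this]
  show ?thesis
    unfolding eqs
  proof (intro equalityI subsetI)
    fix y assume "y \<in> act w ` {x. length x = k \<and> distinct x \<and> set x \<in> X}"
    then show "y \<in> {y. length y = k \<and> distinct y \<and> set y \<in> (`) w ` X}"
      using inj by (auto simp: act_def distinct_map)
  next
    fix y assume y: "y \<in> {y. length y = k \<and> distinct y \<and> set y \<in> (`) w ` X}"
    then obtain A where A: "A \<in> X" "set y = w ` A" by auto
    have "map (inv w) y \<in> {x. length x = k \<and> distinct x \<and> set x \<in> X}"
      using y A inj by (auto simp: distinct_map image_inv_f_f)
    moreover have "y = act w (map (inv w) y)"
      using assms(1) by (simp add: act_def comp_def bij_is_surj surj_f_inv_f)
    ultimately show "y \<in> act w ` {x. length x = k \<and> distinct x \<and> set x \<in> X}" by blast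
  qed
qed

lemma symdiff_swap:
  assumes "a \<in> A" "b \<notin> A"
  shows "symdiff A {a, b} = insert b (A - {a})"
  using assms unfolding symdiff_def by auto

lemma matroid_exchange:
  assumes "is_matroid X" "A \<in> X" "B \<in> X" "a \<in> A" "a \<notin> B"
  obtains b where "b \<in> B - A" "insert b (A - {a}) \<in> X"
  using assms symdiff_swap unfolding is_matroid_def by (metis DiffD2 DiffI)

lemma matroid_image:
  assumes "inj w" "is_matroid X"
  shows "is_matroid ((`) w ` X)"
  unfolding is_matroid_def
proof (intro ballI)
  fix A' B' a' assume "A' \<in> (`) w ` X" "B' \<in> (`) w ` X" and a': "a' \<in> A' - B'"
  then obtain A B where AB: "A \<in> X" "B \<in> X" "A' = w ` A" "B' = w ` B" by auto
  then obtain a where a: "a \<in> A - B" "a' = w a" using a' assms(1) by (auto simp: inj_image_mem_iff)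
  then obtain b where b: "b \<in> B - A" "symdiff A {a, b} \<in> X"
    using assms(2) AB unfolding is_matroid_def by blast
  have "w b \<in> B' - A'" using b AB assms(1) by (auto simp: inj_image_mem_iff)
  moreover have "symdiff A' {a', w b} = w ` symdiff A {a, b}"
    using AB a assms(1) unfolding symdiff_def by (simp add: image_Un image_set_diff)
  ultimately show "\<exists>b'\<in>B' - A'. symdiff A' {a', b'} \<in> (`) w ` X" using b by blast
qed

lemma finite_obtain_max:
  fixes f :: "'a \<Rightarrow> 'b::linorder"
  assumes "finite A" "A \<noteq> {}"
  obtains x where "x \<in> A" "\<And>y. y \<in> A \<Longrightarrow> f y \<le> f x"
  using assms obtains_MAX Max_ge finite_imageI imageI by metis

lemma card_Int_eq_if_diff_subset:
  assumes "finite A" "finite B" "card A = card B" "A - B \<subseteq> T" "B - A \<subseteq> T"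
  shows "card (A \<inter> T) = card (B \<inter> T)"
proof -
  have A_split: "A \<inter> T = (A \<inter> B \<inter> T) \<union> (A - B)" and B_split: "B \<inter> T = (A \<inter> B \<inter> T) \<union> (B - A)"
    using assms(4,5) by auto
  have "card (A \<inter> T) = card (A \<inter> B \<inter> T) + card (A - B)"
    unfolding A_split by (rule card_Un_disjoint) (use assms in auto)
  moreover have "card (B \<inter> T) = card (A \<inter> B \<inter> T) + card (B - A)"
    unfolding B_split by (rule card_Un_disjoint) (use assms in auto)
  moreover have "card (A - B) = card (B - A)"
    using assms(1-3) by (simp add: card_Diff_subset_Int Int_commute)
  ultimately show ?thesis by simp
qed

lemma matroid_max_sum_gale_maximum:
  assumes fin: "finite X" and cardX: "\<forall>A\<in>X. finite A \<and> card A = k"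
    and mat: "is_matroid X" and M: "M \<in> X" "\<forall>B\<in>X. \<Sum>B \<le> \<Sum>M" and B0: "B0 \<in> X"
  shows "gale_le B0 M"
  unfolding gale_le_def
proof (rule allI, rule ccontr)
  fix c assume "\<not> card (B0 \<inter> {c..}) \<le> card (M \<inter> {c..})"
  define F where "F = {B\<in>X. card (M \<inter> {c..}) < card (B \<inter> {c..})}"
  have "B0 \<in> F" "finite F" using B0 fin \<open>\<not> _\<close> unfolding F_def by auto
  then obtain B where B: "B \<in> F" and B_max: "\<And>B'. B' \<in> F \<Longrightarrow> card (B' \<inter> M) \<le> card (B \<inter> M)"
    using finite_obtain_max[of F "\<lambda>B. card (B \<inter> M)"] by blast
  have BX: "B \<in> X" and Bc: "card (M \<inter> {c..}) < card (B \<inter> {c..})" using B unfolding F_def by auto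
  have fB: "finite B" "card B = k" and fM: "finite M" "card M = k" using BX M cardX by auto
  have B_above: "B - M \<subseteq> {c..}"
  proof
    fix e assume e: "e \<in> B - M"
    show "e \<in> {c..}"
    proof (rule ccontr)
      assume "e \<notin> {c..}"
      obtain b where b: "b \<in> M - B" "insert b (B - {e}) \<in> X"
        using matroid_exchange[OF mat BX M(1)] e by blast
      have "card (B \<inter> {c..}) \<le> card (insert b (B - {e}) \<inter> {c..})"
        using \<open>e \<notin> {c..}\<close> fB by (intro card_mono) auto
      then have "insert b (B - {e}) \<in> F" using b Bc unfolding F_def by auto
      moreover have "insert b (B - {e}) \<inter> M = insert b (B \<inter> M)" using b e by auto
      ultimately show False using B_max[of "insert b (B - {e})"] b fB by simp
    qed
  qed
  obtain a where a: "a \<in> M - B" "a < c"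
  proof -
    have "\<not> M - B \<subseteq> {c..}"
      using card_Int_eq_if_diff_subset[OF fB(1) fM(1) _ B_above] fB fM Bc by auto
    then obtain a where "a \<in> M - B" "a \<notin> {c..}" by blast
    then show ?thesis using that by simp
  qed
  obtain b where b: "b \<in> B - M" "insert b (M - {a}) \<in> X"
    using matroid_exchange[OF mat M(1) BX] a by blast
  have "a < b" using a b B_above by force
  moreover have "\<Sum>M = a + \<Sum>(M - {a})" using a fM by (simp add: sum.remove[of M a])
  moreover have "\<Sum>(insert b (M - {a})) = b + \<Sum>(M - {a})" using b fM by simp
  ultimately have "\<Sum>M < \<Sum>(insert b (M - {a}))" by linarith
  then show False using M(2) b by fastforce
qed

lemma matroid_gale_maximum:
  assumes "finite X" "X \<noteq> {}" "\<forall>A\<in>X. finite A \<and> card A = k" "is_matroid X"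
  obtains M where "M \<in> X" "\<And>B. B \<in> X \<Longrightarrow> gale_le B M"
  using finite_obtain_max[OF assms(1,2), of "\<lambda>B. \<Sum>B"]
    matroid_max_sum_gale_maximum[OF assms(1,3,4)] by metis

lemma gale_le_top_prefix:
  assumes BM: "gale_le B M" and fM: "finite M" and fB: "finite B"
    and S: "S \<subseteq> B" "card S = i" and i: "i \<le> card M"
  shows "gale_le S (set (take i (rev (sorted_list_of_set M))))"
  unfolding gale_le_def
proof
  fix c
  define xs where "xs = rev (sorted_list_of_set M)"
  define T where "T = set (take i xs)"
  have cT: "card T = i" unfolding T_def xs_def using fM i by (simp add: distinct_card)
  have below_T: "v < u" if "u \<in> T" "v \<in> set (drop i xs)" for u v
  proof -
    have "sorted_wrt (>) (take i xs @ drop i xs)"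
      unfolding xs_def append_take_drop_id sorted_wrt_rev by (rule strict_sorted_list_of_set)
    then show ?thesis using that unfolding T_def sorted_wrt_append by blast
  qed
  show "card (S \<inter> {c..}) \<le> card (T \<inter> {c..})"
  proof (cases "T \<subseteq> {c..}")
    case True
    then have "T \<inter> {c..} = T" by auto
    moreover have "card (S \<inter> {c..}) \<le> card S"
      using S fB finite_subset by (intro card_mono) auto
    ultimately show ?thesis using cT S by simp
  next
    case False
    then obtain t where t: "t \<in> T" "t \<notin> {c..}" by blast
    have "M \<inter> {c..} \<subseteq> T"
    proof
      fix u assume u: "u \<in> M \<inter> {c..}"
      then have "u \<in> set xs" using fM unfolding xs_def by simp
      then have "u \<in> set (take i xs) \<or> u \<in> set (drop i xs)"
        by (metis Un_iff append_take_drop_id set_append)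
      then show "u \<in> T" using below_T[OF t(1)] t u unfolding T_def by fastforce
    qed
    have "card (S \<inter> {c..}) \<le> card (B \<inter> {c..})" using S fB by (intro card_mono) auto
    also have "\<dots> \<le> card (M \<inter> {c..})" using BM unfolding gale_le_def by blast
    also have "\<dots> \<le> card (T \<inter> {c..})"
      using \<open>M \<inter> {c..} \<subseteq> T\<close> unfolding T_def by (intro card_mono) auto
    finally show ?thesis .
  qed
qed

lemma matroid_barycentric_maximum:
  assumes "finite X" "X \<noteq> {}" and cardX: "\<forall>A\<in>X. finite A \<and> card A = k" and "is_matroid X"
  shows "\<exists>m. is_maximum k (barycentric k X) m"
proof -
  obtain M where M: "M \<in> X" "\<And>B. B \<in> X \<Longrightarrow> gale_le B M"
    using matroid_gale_maximum[OF assms] by blast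
  have fM: "finite M" "card M = k" using M(1) cardX by auto
  define m where "m = rev (sorted_list_of_set M)"
  have m: "length m = k" "distinct m" "set m = M" using fM unfolding m_def by auto
  have "bruhat_conf k y m" if "y \<in> barycentric k X" for y
    unfolding bruhat_conf_def
  proof
    fix i assume i: "i \<in> {1..k}"
    have y: "length y = k" "distinct y" "set y \<in> X"
      using that barycentric_eq[OF cardX] by auto
    have "card (P i y) = i" "card (P i m) = i"
      unfolding P_def using y m i by (simp_all add: distinct_card)
    moreover have "gale_le (P i y) (P i m)"
      unfolding P_def m_def
      by (rule gale_le_top_prefix[OF M(2)[OF y(3)] fM(1) finite_set])
        (use y cardX fM i in \<open>auto simp: distinct_card dest: in_set_takeD\<close>)
    ultimately show "bruhat_set i (P i y) (P i m)"
      by (intro gale_le_imp_bruhat_set) (auto simp: P_def)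
  qed
  moreover have "m \<in> barycentric k X" using m M(1) barycentric_eq[OF cardX] by simp
  ultimately show ?thesis unfolding is_maximum_def by blast
qed

lemma barycentric_maximum_gale_top:
  assumes "0 < k" and cardX: "\<forall>A\<in>X. finite A \<and> card A = k"
    and m: "is_maximum k (barycentric k X) m"
  shows "set m \<in> X" "\<And>C. C \<in> X \<Longrightarrow> gale_le C (set m)"
proof -
  have m_props: "length m = k" "distinct m" "set m \<in> X"
    using m barycentric_eq[OF cardX] unfolding is_maximum_def by auto
  then show "set m \<in> X" by simp
  fix C assume C: "C \<in> X"
  have fC: "finite C" "card C = k" using C cardX by auto
  have "sorted_list_of_set C \<in> barycentric k X" using C fC barycentric_eq[OF cardX] by simp
  then have "bruhat_conf k (sorted_list_of_set C) m" using m unfolding is_maximum_def by blast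
  then have "bruhat_set k (P k (sorted_list_of_set C)) (P k m)"
    using assms(1) unfolding bruhat_conf_def by simp
  then have "bruhat_set k C (set m)"
    using fC m_props unfolding P_def by simp
  then show "gale_le C (set m)"
    by (rule bruhat_set_imp_gale_le[rotated 4]) (use fC m_props in \<open>auto simp: distinct_card\<close>)
qed

lemma ranking_permutation:
  fixes key :: "nat \<Rightarrow> 'a::linorder"
  assumes key: "inj_on key {1..n}"
  obtains w where "w permutes {1..n}"
    "\<And>x y. x \<in> {1..n} \<Longrightarrow> y \<in> {1..n} \<Longrightarrow> key x < key y \<Longrightarrow> w x < w y"
proof -
  define rank where "rank x = card {y\<in>{1..n}. key y \<le> key x}" for x
  define w where "w x = (if x \<in> {1..n} then rank x else x)" for x
  have mono: "rank x < rank y" if "x \<in> {1..n}" "y \<in> {1..n}" "key x < key y" for x y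
  proof -
    have "{z\<in>{1..n}. key z \<le> key x} \<subseteq> {z\<in>{1..n}. key z \<le> key y}"
      using that by auto
    moreover have "y \<in> {z\<in>{1..n}. key z \<le> key y} - {z\<in>{1..n}. key z \<le> key x}"
      using that by auto
    ultimately show ?thesis unfolding rank_def by (intro psubset_card_mono) auto
  qed
  have "inj_on rank {1..n}"
  proof (rule inj_onI, rule ccontr)
    fix x y assume xy: "x \<in> {1..n}" "y \<in> {1..n}" "rank x = rank y" "x \<noteq> y"
    then have "key x < key y \<or> key y < key x" using key by (metis inj_on_def neq_iff)
    then show False using mono xy by fastforce
  qed
  moreover have "rank ` {1..n} \<subseteq> {1..n}"
  proof (rule image_subsetI)
    fix x assume x: "x \<in> {1..n}"
    have "0 < rank x" unfolding rank_def using x by (subst card_gt_0_iff) auto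
    moreover have "rank x \<le> card {1..n}" unfolding rank_def by (rule card_mono) auto
    ultimately show "rank x \<in> {1..n}" by simp
  qed
  ultimately have "bij_betw rank {1..n} {1..n}"
    by (simp add: bij_betw_def endo_inj_surj)
  then have "bij_betw w {1..n} {1..n}"
    by (rule bij_betw_cong[THEN iffD1, rotated]) (simp add: w_def)
  then have "w permutes {1..n}" by (rule bij_imp_permutes) (auto simp: w_def)
  then show ?thesis using that mono by (simp add: w_def)
qed

lemma nested_ranking_permutation:
  fixes S1 S2 :: "nat set"
  assumes "S1 \<subseteq> S2" "S2 \<subseteq> {1..n}"
  obtains w where "w permutes {1..n}"
    "\<And>U s t. U \<in> {S1, S2} \<Longrightarrow> s \<in> U \<Longrightarrow> t \<in> {1..n} - U \<Longrightarrow> w t < w s"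
proof -
  define key where "key x = (if x \<in> S1 then 2 * n + x else if x \<in> S2 then n + x else x)" for x
  have key: "inj_on key {1..n}" by (rule inj_onI) (auto simp: key_def split: if_splits)
  obtain w where "w permutes {1..n}"
    and w: "\<And>x y. x \<in> {1..n} \<Longrightarrow> y \<in> {1..n} \<Longrightarrow> key x < key y \<Longrightarrow> w x < w y"
    using ranking_permutation[OF key] by metis
  moreover have "w t < w s" if "U \<in> {S1, S2}" "s \<in> U" "t \<in> {1..n} - U" for U s t
    using that assms by (intro w) (auto simp: key_def)
  ultimately show ?thesis using that by blast
qed

lemma gale_le_image_imp_card_Int_le:
  assumes w: "w permutes {1..n}" and U: "U \<subseteq> {1..n}"
    and top: "\<And>s t. s \<in> U \<Longrightarrow> t \<in> {1..n} - U \<Longrightarrow> w t < w s"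
    and "C \<subseteq> {1..n}" "D \<subseteq> {1..n}" "gale_le (w ` C) (w ` D)"
  shows "card (C \<inter> U) \<le> card (D \<inter> U)"
proof (cases "U = {}")
  case False
  define c where "c = Min (w ` U)"
  have fU: "finite U" using U finite_subset by blast
  have "c \<in> w ` U" unfolding c_def using fU False by (intro Min_in) auto
  then obtain s0 where s0: "s0 \<in> U" "c = w s0" by auto
  have "w ` Z \<inter> {c..} = w ` (Z \<inter> U)" if "Z \<subseteq> {1..n}" for Z
  proof
    show "w ` (Z \<inter> U) \<subseteq> w ` Z \<inter> {c..}" unfolding c_def using fU by auto
    show "w ` Z \<inter> {c..} \<subseteq> w ` (Z \<inter> U)"
      using top[OF s0(1)] s0(2) that by (force simp: not_le[symmetric])
  qed
  moreover have "card (w ` Z) = card Z" for Z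
    using permutes_inj[OF w] by (simp add: card_image inj_on_subset)
  ultimately show ?thesis using assms(4-6) unfolding gale_le_def by metis
qed simp

lemma card_Int_ge_imp_subset:
  assumes "finite U" "card U \<le> card (V \<inter> U)"
  shows "U \<subseteq> V"
  using card_seteq[OF assms(1) _ assms(2)] by blast

lemma exchange_if_sandwiched:
  assumes "finite A" "a \<in> A" "A - {a} \<subseteq> A0" "A0 \<subseteq> (A - {a}) \<union> (B - A)" "card A0 = card A"
  obtains b where "b \<in> B - A" "symdiff A {a, b} = A0"
proof -
  have card_A: "card (A - {a}) = card A - 1" "0 < card A"
    using assms(1,2) by (auto simp: card_gt_0_iff)
  then have "A0 \<noteq> A - {a}" using assms(5) by auto
  then obtain b where b: "b \<in> A0" "b \<notin> A - {a}" using assms(3) by blast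
  then have "b \<in> B - A" using assms(4) by blast
  have "insert b (A - {a}) = A0"
    using b assms card_A by (intro card_seteq) (auto simp: card_ge_0_finite)
  then have "symdiff A {a, b} = A0" using symdiff_swap[OF assms(2)] \<open>b \<in> B - A\<close> by simp
  then show ?thesis using that \<open>b \<in> B - A\<close> by blast
qed

lemma exchange_failure_no_barycentric_maximum:
  assumes k: "0 < k" and X: "X \<subseteq> ksets n k"
    and A: "A \<in> X" and B: "B \<in> X" and a: "a \<in> A" "a \<notin> B"
    and no_exchange: "\<forall>b\<in>B - A. symdiff A {a, b} \<notin> X"
  obtains w where "w permutes {1..n}" "\<And>m. \<not> is_maximum k (act w ` barycentric k X) m"
proof -
  have cardX: "finite C \<and> card C = k \<and> C \<subseteq> {1..n}" if "C \<in> X" for C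
    using X that unfolding ksets_def by (auto intro: finite_subset)
  define S1 where "S1 = A - {a}"
  define S2 where "S2 = S1 \<union> (B - A)"
  have S12: "S1 \<subseteq> S2" "S2 \<subseteq> {1..n}" using cardX A B unfolding S1_def S2_def by auto
  obtain w where w: "w permutes {1..n}"
    and top: "\<And>U s t. U \<in> {S1, S2} \<Longrightarrow> s \<in> U \<Longrightarrow> t \<in> {1..n} - U \<Longrightarrow> w t < w s"
    using nested_ranking_permutation[OF S12] by blast
  have cardwX: "\<forall>C\<in>(`) w ` X. finite C \<and> card C = k"
    using cardX permutes_inj[OF w] by (auto simp: card_image inj_on_subset)
  have "\<not> is_maximum k (act w ` barycentric k X) m" for m
  proof
    assume "is_maximum k (act w ` barycentric k X) m"
    then have m: "is_maximum k (barycentric k ((`) w ` X)) m"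
      using act_barycentric[OF permutes_bij[OF w]] cardX by simp
    obtain A0 where A0: "A0 \<in> X" "set m = w ` A0"
      using barycentric_maximum_gale_top(1)[OF k cardwX m] by blast
    have dom: "card (C \<inter> U) \<le> card (A0 \<inter> U)" if "C \<in> X" "U \<in> {S1, S2}" for C U
      using barycentric_maximum_gale_top(2)[OF k cardwX m] that A0 cardX S12
      by (intro gale_le_image_imp_card_Int_le[OF w _ top]) auto
    have "card (A \<inter> S1) \<le> card (A0 \<inter> S1)" "card (B \<inter> S2) \<le> card (A0 \<inter> S2)"
      using dom[OF A] dom[OF B] by simp_all
    moreover have "A \<inter> S1 = S1" "B \<inter> S2 = B" using a unfolding S1_def S2_def by auto
    ultimately have "card S1 \<le> card (A0 \<inter> S1)" "card A0 \<le> card (S2 \<inter> A0)"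
      using cardX[OF A0(1)] cardX[OF B] by (simp_all add: Int_commute)
    then have "S1 \<subseteq> A0" "A0 \<subseteq> S2"
      using cardX[OF A] cardX[OF A0(1)] unfolding S1_def
      by (simp_all add: card_Int_ge_imp_subset)
    then obtain b where "b \<in> B - A" "symdiff A {a, b} = A0"
      using exchange_if_sandwiched[of A a A0 B] cardX[OF A] cardX[OF A0(1)] a(1)
      unfolding S1_def S2_def by blast
    then show False using no_exchange A0(1) by blast
  qed
  then show ?thesis using that w by blast
qed

theorem theorem4p1:
  fixes n k :: nat and X :: "nat set set"
  assumes "0 < k" and "k \<le> n" and "X \<subseteq> ksets n k" and "X \<noteq> {}"
  shows "is_matroid X \<longleftrightarrow> coxeter_matroid k n (barycentric k X)"
proof
  assume mat: "is_matroid X"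
  have cardX: "\<forall>A\<in>X. finite A \<and> card A = k"
    using assms(3) unfolding ksets_def by (auto intro: finite_subset)
  have "finite X" using assms(3) unfolding ksets_def by (simp add: finite_subset)
  show "coxeter_matroid k n (barycentric k X)"
    unfolding coxeter_matroid_def
  proof (intro allI impI)
    fix w assume w: "w permutes {1..n}"
    have wX: "\<forall>A\<in>(`) w ` X. finite A \<and> card A = k"
      using cardX permutes_inj[OF w] by (auto simp: card_image inj_on_subset)
    obtain m where m: "is_maximum k (barycentric k ((`) w ` X)) m"
      using matroid_barycentric_maximum[OF _ _ wX matroid_image[OF permutes_inj[OF w] mat]]
        \<open>finite X\<close> assms(4) by auto
    moreover have "m' = m" if "is_maximum k (barycentric k ((`) w ` X)) m'" for m'
      using is_maximum_unique[OF _ that m] barycentric_eq[OF wX] by simp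
    ultimately show "\<exists>!m. is_maximum k (act w ` barycentric k X) m"
      unfolding act_barycentric[OF permutes_bij[OF w] cardX] by blast
  qed
next
  assume cox: "coxeter_matroid k n (barycentric k X)"
  show "is_matroid X"
  proof (rule ccontr)
    assume "\<not> is_matroid X"
    then obtain A B a where "A \<in> X" "B \<in> X" "a \<in> A" "a \<notin> B"
      and "\<forall>b\<in>B - A. symdiff A {a, b} \<notin> X"
      unfolding is_matroid_def by blast
    then obtain w where "w permutes {1..n}" "\<And>m. \<not> is_maximum k (act w ` barycentric k X) m"
      using exchange_failure_no_barycentric_maximum[OF assms(1,3)] by metis
    then show False using cox unfolding coxeter_matroid_def by blast
  qed
qed

end
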